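(* Let $n,k\ge 1$ be integers and let $X=\{0,1,\ldots,k\}^n$ with the $\ell_1$-metric. Suppose $X=X_1\cup\cdots\cup X_n$ and that for every point $x\in X$ the open ball of radius $n+1$ about $x$ is contained in some $X_i$. Then there is an index $i$ such that some $2$-component of $X_i$ contains two points whose $i$-th coordinates differ by $k$.
   Context: For $Y\subseteq X$ and $r>0$, two points of $Y$ lie in the same $r$-component of $Y$ if there is a sequence $y_0,\dots,y_m$ in $Y$ from one to the other with $d(y_j,y_{j+1})<r$ for all $j$. *)

theory Defs
  imports Main
begin

text \<open>The grid X = {0,...,k}^n, points as functions nat => nat with coordinates
  indexed by 0..n-1 (coordinate i < n), and value 0 outside the index range.\<close>
definition grid :: "nat \<Rightarrow> nat \<Rightarrow> (nat \<Rightarrow> nat) set" where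
  "grid n k = {x. (\<forall>i<n. x i \<le> k) \<and> (\<forall>i\<ge>n. x i = 0)}"

definition l1dist :: "nat \<Rightarrow> (nat \<Rightarrow> nat) \<Rightarrow> (nat \<Rightarrow> nat) \<Rightarrow> int" where
  "l1dist n x y = (\<Sum>i<n. \<bar>int (x i) - int (y i)\<bar>)"

definition same_rcomp ::
  "('a \<Rightarrow> 'a \<Rightarrow> int) \<Rightarrow> 'a set \<Rightarrow> int \<Rightarrow> 'a \<Rightarrow> 'a \<Rightarrow> bool" where
  "same_rcomp d Y r a b =
     (\<exists>ys::'a list. ys \<noteq> [] \<and> hd ys = a \<and> last ys = b \<and> set ys \<subseteq> Y \<and>
        (\<forall>j. Suc j < length ys \<longrightarrow> d (ys ! j) (ys ! Suc j) < r))"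

end

theory Submission
  imports Defs "HOL-Analysis.Brouwer_Fixpoint"
begin

text \<open>Suppose no \<open>X\<^sub>i\<close> has a 2-component containing points whose \<open>i\<close>-th coordinates
  differ by \<open>k\<close>. Label a grid point \<open>x\<close> in direction \<open>i\<close> by 1 if \<open>x \<in> X\<^sub>i\<close> and its
  2-component in \<open>X\<^sub>i\<close> reaches the face \<open>x\<^sub>i = k\<close>, and for \<open>x \<notin> X\<^sub>i\<close> by 1 iff \<open>x\<^sub>i = k\<close>.
  By assumption this label vanishes on the face \<open>x\<^sub>i = 0\<close>, and it is 1 on the face
  \<open>x\<^sub>i = k\<close>, so Kuhn's combinatorial lemma yields a unit cube on which every label
  direction takes both values. But the cube lies in the ball of radius \<open>n + 1\<close> around
  its lowest corner, hence in some \<open>X\<^sub>j\<close>, and it is 2-connected, so the \<open>j\<close>-th label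
  is constant on it.\<close>

lemma same_rcomp_iff_successively:
  "same_rcomp d Y r a b \<longleftrightarrow>
     (\<exists>ys. ys \<noteq> [] \<and> hd ys = a \<and> last ys = b \<and> set ys \<subseteq> Y \<and>
        successively (\<lambda>x y. d x y < r) ys)"
  unfolding same_rcomp_def successively_conv_nth ..

lemma same_rcomp_refl: "a \<in> Y \<Longrightarrow> same_rcomp d Y r a a"
  unfolding same_rcomp_iff_successively by (intro exI[of _ "[a]"]) auto

lemma same_rcomp_Cons:
  assumes "x \<in> Y" "d x a < r" "same_rcomp d Y r a b"
  shows "same_rcomp d Y r x b"
proof -
  obtain ys where "ys \<noteq> []" "hd ys = a" "last ys = b" "set ys \<subseteq> Y"
    "successively (\<lambda>x y. d x y < r) ys"
    using assms(3) unfolding same_rcomp_iff_successively by blast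
  then show ?thesis
    unfolding same_rcomp_iff_successively
    using assms(1,2) by (intro exI[of _ "x # ys"]) (auto simp: successively_Cons)
qed

lemma same_rcomp_trans:
  assumes "same_rcomp d Y r a b" "same_rcomp d Y r b c"
  shows "same_rcomp d Y r a c"
proof -
  obtain ys where ys: "ys \<noteq> []" "hd ys = a" "last ys = b" "set ys \<subseteq> Y"
    "successively (\<lambda>x y. d x y < r) ys"
    using assms(1) unfolding same_rcomp_iff_successively by blast
  obtain zs where zs: "last (b # zs) = c" "set (b # zs) \<subseteq> Y"
    "successively (\<lambda>x y. d x y < r) (b # zs)"
    using assms(2) unfolding same_rcomp_iff_successively by (metis list.collapse)
  show ?thesis
    unfolding same_rcomp_iff_successively
    using ys zs by (intro exI[of _ "ys @ zs"]) (auto simp: successively_append_iff successively_Cons)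
qed

lemma l1dist_fun_upd:
  "l1dist n x (x(i := v)) = (if i < n then \<bar>int (x i) - int v\<bar> else 0)"
proof -
  have "\<bar>int (x j) - int ((x(i := v)) j)\<bar> = (if j = i then \<bar>int (x i) - int v\<bar> else 0)" for j
    by simp
  then show ?thesis
    unfolding l1dist_def by (simp add: sum.delta)
qed

definition unit_cube :: "nat \<Rightarrow> (nat \<Rightarrow> nat) \<Rightarrow> (nat \<Rightarrow> nat) set" where
  "unit_cube n q = {z. (\<forall>i<n. q i \<le> z i \<and> z i \<le> q i + 1) \<and> (\<forall>i\<ge>n. z i = 0)}"

lemma unit_cube_subset_ball:
  assumes "\<forall>i<n. q i < k"
  shows "unit_cube n q \<subseteq> {y \<in> grid n k. l1dist n q y < int n + 1}"
proof
  fix y assume y: "y \<in> unit_cube n q"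
  then have "y \<in> grid n k"
    using assms by (fastforce simp: unit_cube_def grid_def)
  moreover have "l1dist n q y \<le> (\<Sum>i<n. 1)"
    unfolding l1dist_def using y by (intro sum_mono) (auto simp: unit_cube_def)
  ultimately show "y \<in> {y \<in> grid n k. l1dist n q y < int n + 1}"
    by simp
qed

text \<open>Moving one coordinate at a time, any two corners of a unit cube are joined by
  steps of \<open>l\<^sub>1\<close>-length at most 1.\<close>
lemma same_rcomp_unit_cube:
  assumes "unit_cube n q \<subseteq> Y" "x \<in> unit_cube n q" "y \<in> unit_cube n q"
  shows "same_rcomp (l1dist n) Y 2 x y"
proof -
  have "same_rcomp (l1dist n) Y 2 x y"
    if "finite D" "{i. x i \<noteq> y i} \<subseteq> D" "x \<in> unit_cube n q" for D x
    using that
  proof (induction D arbitrary: x rule: finite_induct)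
    case empty
    then have "x = y" by auto
    with assms show ?case by (auto intro: same_rcomp_refl)
  next
    case (insert i D)
    define x' where "x' = x(i := y i)"
    have "x' \<in> unit_cube n q"
      using insert.prems(2) assms(3) by (auto simp: x'_def unit_cube_def)
    moreover have "{i. x' i \<noteq> y i} \<subseteq> D"
      using insert.prems(1) by (auto simp: x'_def)
    ultimately have "same_rcomp (l1dist n) Y 2 x' y"
      using insert.IH by blast
    moreover have "l1dist n x x' < 2"
    proof (cases "i < n")
      case True
      then have "q i \<le> x i" "x i \<le> q i + 1" "q i \<le> y i" "y i \<le> q i + 1"
        using insert.prems(2) assms(3) by (auto simp: unit_cube_def)
      with True show ?thesis
        by (simp add: x'_def l1dist_fun_upd abs_less_iff)
    qed (simp add: x'_def l1dist_fun_upd)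
    ultimately show ?case
      using insert.prems(2) assms(1) by (blast intro: same_rcomp_Cons)
  qed
  moreover have "{i. x i \<noteq> y i} \<subseteq> {..<n}"
  proof
    fix i assume "i \<in> {i. x i \<noteq> y i}"
    show "i \<in> {..<n}"
    proof (rule ccontr)
      assume "i \<notin> {..<n}"
      then have "x i = 0" "y i = 0"
        using assms(2,3) by (simp_all add: unit_cube_def)
      with \<open>i \<in> {i. x i \<noteq> y i}\<close> show False
        by simp
    qed
  qed
  ultimately show ?thesis
    using assms(2) by blast
qed

lemma kuhn_lemma_grid:
  fixes label :: "(nat \<Rightarrow> nat) \<Rightarrow> nat \<Rightarrow> bool"
  assumes "0 < k"
    and "\<And>x i. x \<in> grid n k \<Longrightarrow> i < n \<Longrightarrow> x i = 0 \<Longrightarrow> \<not> label x i"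
    and "\<And>x i. x \<in> grid n k \<Longrightarrow> i < n \<Longrightarrow> x i = k \<Longrightarrow> label x i"
  obtains q where "q \<in> grid n k" "\<forall>i<n. q i < k"
    and "\<forall>i<n. \<exists>r\<in>unit_cube n q. \<exists>s\<in>unit_cube n q. label r i \<noteq> label s i"
proof -
  define trunc where "trunc x = (\<lambda>i. if i < n then x i else 0)" for x :: "nat \<Rightarrow> nat"
  have grid_trunc: "trunc x \<in> grid n k" if "\<forall>i<n. x i \<le> k" for x
    using that by (simp add: trunc_def grid_def)
  obtain q where q: "\<forall>i<n. q i < k"
    and labels_differ: "\<forall>i<n. \<exists>r s. (\<forall>j<n. q j \<le> r j \<and> r j \<le> q j + 1) \<and>
        (\<forall>j<n. q j \<le> s j \<and> s j \<le> q j + 1) \<and>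
        (if label (trunc r) i then 1 else 0) \<noteq> (if label (trunc s) i then 1 else (0::nat))"
    by (rule kuhn_lemma[of k n "\<lambda>x i. if label (trunc x) i then 1 else 0"])
      (use assms grid_trunc in \<open>auto simp: trunc_def\<close>)
  show thesis
  proof
    show "trunc q \<in> grid n k"
      using q by (simp add: grid_trunc less_imp_le)
    show "\<forall>i<n. trunc q i < k"
      using q by (simp add: trunc_def)
    show "\<forall>i<n. \<exists>r\<in>unit_cube n (trunc q). \<exists>s\<in>unit_cube n (trunc q). label r i \<noteq> label s i"
    proof (intro allI impI)
      fix i assume "i < n"
      then obtain r s where "\<forall>j<n. q j \<le> r j \<and> r j \<le> q j + 1" "\<forall>j<n. q j \<le> s j \<and> s j \<le> q j + 1"
        "label (trunc r) i \<noteq> label (trunc s) i"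
        using labels_differ by (metis (full_types))
      then show "\<exists>r\<in>unit_cube n (trunc q). \<exists>s\<in>unit_cube n (trunc q). label r i \<noteq> label s i"
        by (intro bexI[of _ "trunc r"] bexI[of _ "trunc s"]) (auto simp: unit_cube_def trunc_def)
    qed
  qed
qed

theorem lemma2p2:
  fixes n k :: nat and Xs :: "nat \<Rightarrow> (nat \<Rightarrow> nat) set"
  assumes "n \<ge> 1" and "k \<ge> 1"
    and "\<forall>i<n. Xs i \<subseteq> grid n k"
    and "(\<Union>i<n. Xs i) = grid n k"
    and "\<forall>x\<in>grid n k. \<exists>i<n.
           {y \<in> grid n k. l1dist n x y < int n + 1} \<subseteq> Xs i"
  shows "\<exists>i<n. \<exists>a\<in>Xs i. \<exists>b\<in>Xs i.
           same_rcomp (l1dist n) (Xs i) 2 a b \<and> \<bar>int (a i) - int (b i)\<bar> = int k"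
proof (rule ccontr)
  assume no_crossing: "\<not> ?thesis"
  define label where "label x i \<longleftrightarrow>
    (if x \<in> Xs i then \<exists>b\<in>Xs i. b i = k \<and> same_rcomp (l1dist n) (Xs i) 2 x b else x i = k)"
    for x i
  have label_0: "\<not> label x i" if "i < n" "x i = 0" for x i
  proof
    assume "label x i"
    with \<open>x i = 0\<close> \<open>k \<ge> 1\<close> obtain b where "x \<in> Xs i" "b \<in> Xs i" "b i = k"
      "same_rcomp (l1dist n) (Xs i) 2 x b"
      by (auto simp: label_def split: if_splits)
    moreover have "\<bar>int (x i) - int (b i)\<bar> = int k"
      using \<open>x i = 0\<close> \<open>b i = k\<close> by simp
    ultimately show False
      using \<open>i < n\<close> no_crossing by blast
  qed
  have label_k: "label x i" if "x i = k" for x i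
    using that by (auto simp: label_def intro: same_rcomp_refl)
  obtain q where q: "q \<in> grid n k" "\<forall>i<n. q i < k"
    and nonconstant: "\<forall>i<n. \<exists>r\<in>unit_cube n q. \<exists>s\<in>unit_cube n q. label r i \<noteq> label s i"
    using kuhn_lemma_grid[of k n label] label_0 label_k \<open>k \<ge> 1\<close> by auto
  obtain j where "j < n" and ball: "{y \<in> grid n k. l1dist n q y < int n + 1} \<subseteq> Xs j"
    using assms(5) q(1) by blast
  with unit_cube_subset_ball[OF q(2)] have cube: "unit_cube n q \<subseteq> Xs j"
    by blast
  from \<open>j < n\<close> obtain r s where rs: "r \<in> unit_cube n q" "s \<in> unit_cube n q" "label r j \<noteq> label s j"
    using nonconstant by blast
  have "r \<in> Xs j" "s \<in> Xs j"
    using rs(1,2) cube by blast+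
  moreover have "same_rcomp (l1dist n) (Xs j) 2 r s" "same_rcomp (l1dist n) (Xs j) 2 s r"
    using same_rcomp_unit_cube[OF cube] rs(1,2) by blast+
  ultimately have "label r j = label s j"
    unfolding label_def by (meson same_rcomp_trans)
  with rs(3) show False ..
qed

end
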